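(* Let $a\ge 2$ be even and let $c$ be an integer with $c\neq a$ and $\frac a2<c$. Then $U=\{(a,-a),(c,-c)\}\subseteq\mathcal{B}$ is unavoidable.
   Context: The bicyclic inverse semigroup is $\mathcal{B}=\{(a,b)\in\mathbb{Z}\times\mathbb{Z}\mid a\ge 0,\ a+b\ge 0\}$ with multiplication $(a,b)(c,d)=(\max\{c+d,a\}-d,\ b+d)$. A subset $U\subseteq\mathcal{B}$ is called avoidable if $\mathcal{B}$ can be partitioned into two subsets $A$ and $B$ such that no element of $U$ can be written as a product $xy$ of two distinct elements $x\neq y$ both in $A$, or both in $B$. A set is unavoidable if it is not avoidable. *)

theory Defs
  imports Main
begin

definition bicyclic :: "(int \<times> int) set" where
  "bicyclic = {(a, b). a \<ge> 0 \<and> a + b \<ge> 0}"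

fun bmult :: "int \<times> int \<Rightarrow> int \<times> int \<Rightarrow> int \<times> int" where
  "bmult (a, b) (c, d) = (max (c + d) a - d, b + d)"

definition avoidable :: "(int \<times> int) set \<Rightarrow> bool" where
  "avoidable U \<longleftrightarrow> (\<exists>A B. A \<union> B = bicyclic \<and> A \<inter> B = {} \<and>
     (\<forall>x\<in>A. \<forall>y\<in>A. x \<noteq> y \<longrightarrow> bmult x y \<notin> U) \<and>
     (\<forall>x\<in>B. \<forall>y\<in>B. x \<noteq> y \<longrightarrow> bmult x y \<notin> U))"

definition unavoidable :: "(int \<times> int) set \<Rightarrow> bool" where
  "unavoidable U \<longleftrightarrow> \<not> avoidable U"

end

theory Submission
  imports Defs
begin

text \<open>With \<open>a = 2k\<close>, the three elements \<open>(k, -k)\<close>, \<open>(k + 1, -k)\<close> and \<open>(c - k, k - c)\<close>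
  pairwise multiply into \<open>U\<close>. They form a triangle, and any partition of the bicyclic semigroup
  into two classes puts two vertices of a triangle into the same class.\<close>

definition linked :: "(int \<times> int) set \<Rightarrow> int \<times> int \<Rightarrow> int \<times> int \<Rightarrow> bool" where
  "linked U x y \<longleftrightarrow> x \<noteq> y \<and> (bmult x y \<in> U \<or> bmult y x \<in> U)"

lemma unavoidable_if_linked_triangle:
  assumes "x \<in> bicyclic" "y \<in> bicyclic" "z \<in> bicyclic"
    and "linked U x y" "linked U y z" "linked U x z"
  shows "unavoidable U"
  unfolding unavoidable_def avoidable_def
proof (intro notI, elim exE conjE)
  fix A B
  assume cover: "A \<union> B = bicyclic"
    and free_A: "\<forall>x\<in>A. \<forall>y\<in>A. x \<noteq> y \<longrightarrow> bmult x y \<notin> U"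
    and free_B: "\<forall>x\<in>B. \<forall>y\<in>B. x \<noteq> y \<longrightarrow> bmult x y \<notin> U"
  have unlinked: "\<not> linked U p q" if "p \<in> A \<and> q \<in> A \<or> p \<in> B \<and> q \<in> B" for p q
    using that free_A free_B unfolding linked_def by metis
  have "x \<in> A \<or> x \<in> B" "y \<in> A \<or> y \<in> B" "z \<in> A \<or> z \<in> B"
    using assms(1-3) cover by auto
  then show False
    using unlinked[of x y] unlinked[of y z] unlinked[of x z] assms(4-6) by blast
qed

theorem lemma3p2:
  fixes a c :: int
  assumes "a \<ge> 2" and "even a" and "c \<noteq> a" and "a div 2 < c"
  shows "unavoidable {(a, -a), (c, -c)}"
proof -
  define k where "k = a div 2"
  have a_eq: "a = 2 * k" and k_pos: "k \<ge> 1" and c_gt: "c > k"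
    using assms unfolding k_def by auto
  let ?U = "{(a, -a), (c, -c)}"
  let ?x = "(k, -k)" and ?y = "(k + 1, -k)" and ?z = "(c - k, k - c)"
  have "bmult ?x ?y = (a, -a)" "bmult ?z ?y = (c, -c)" "bmult ?x ?z = (c, -c)"
    using a_eq k_pos c_gt by (auto simp: max_def)
  moreover have "?y \<noteq> ?z" "?x \<noteq> ?z"
    using a_eq assms(3) by auto
  ultimately have links: "linked ?U ?x ?y" "linked ?U ?y ?z" "linked ?U ?x ?z"
    unfolding linked_def by auto
  have members: "?x \<in> bicyclic" "?y \<in> bicyclic" "?z \<in> bicyclic"
    using k_pos c_gt by (auto simp: bicyclic_def)
  show ?thesis
    using unavoidable_if_linked_triangle[OF members links] .
qed

end
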